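(* Let $p,q\in\mathscr P(\mathbb C)$ with $p(z)\le q(z)$ for every $z\in\mathbb C$. Then $\mathcal F^{p(\cdot)}\subset\mathcal F^{q(\cdot)}$, and there is a constant $M>0$ such that $\|f\|_{\mathcal F^{q(\cdot)}}\le M\|f\|_{\mathcal F^{p(\cdot)}}$ for every $f\in\mathcal F^{p(\cdot)}$.
   Context: $A$ denotes Lebesgue area measure on $\mathbb C$. A variable exponent is a measurable function $p:\mathbb C\to[1,\infty)$; $p^+=\operatorname{ess\,sup}_{\mathbb C}p$, and $\mathscr P(\mathbb C)$ is the set of variable exponents with $p^+<\infty$. For such $p$, $\mathcal L^{p(\cdot)}$ is the space of measurable $f:\mathbb C\to\mathbb C$ such that $\int_{\mathbb C}(\lambda|f(z)|)^{p(z)}e^{-p(z)|z|^2}\,dA(z)<\infty$ for some $\lambda>0$, normed by $\|f\|_{\mathcal L^{p(\cdot)}}=\inf\{\lambda>0:\int_{\mathbb C}(|f(z)|/\lambda)^{p(z)}e^{-p(z)|z|^2}\,dA(z)\le1\}$. The variable exponent Fock space $\mathcal F^{p(\cdot)}$ is the set of entire functions belonging to $\mathcal L^{p(\cdot)}$, with the same norm. *)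

theory Defs
  imports "HOL-Analysis.Analysis"
begin

definition var_exponent :: "(complex \<Rightarrow> real) \<Rightarrow> bool" where
  "var_exponent p \<longleftrightarrow> p \<in> borel_measurable lborel \<and> (\<forall>z. 1 \<le> p z)"

definition var_exponent_bdd :: "(complex \<Rightarrow> real) \<Rightarrow> bool" where
  "var_exponent_bdd p \<longleftrightarrow> var_exponent p \<and>
     (\<exists>C. AE z in lborel. p z \<le> C)"

definition fock_modular :: "(complex \<Rightarrow> real) \<Rightarrow> (complex \<Rightarrow> complex) \<Rightarrow> ennreal" where
  "fock_modular p f =
     (\<integral>\<^sup>+ z. ennreal ((cmod (f z)) powr (p z) * exp (- p z * (cmod z)\<^sup>2)) \<partial>lborel)"

definition Lp_var :: "(complex \<Rightarrow> real) \<Rightarrow> (complex \<Rightarrow> complex) set" where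
  "Lp_var p = {f. f \<in> borel_measurable lborel \<and>
      (\<exists>c>0. fock_modular p (\<lambda>z. of_real c * f z) < \<infinity>)}"

definition Lp_var_norm :: "(complex \<Rightarrow> real) \<Rightarrow> (complex \<Rightarrow> complex) \<Rightarrow> real" where
  "Lp_var_norm p f = Inf {c::real. 0 < c \<and> fock_modular p (\<lambda>z. f z / of_real c) \<le> 1}"

definition Fock_var :: "(complex \<Rightarrow> real) \<Rightarrow> (complex \<Rightarrow> complex) set" where
  "Fock_var p = {f. f holomorphic_on UNIV \<and> f \<in> Lp_var p}"

end

theory Submission
  imports Defs "HOL-Complex_Analysis.Complex_Analysis"
begin

(* Suppose rho_p(f/c) <= 1 and put G(w) = |f(w)| e^(-|w|^2) / c. The Cauchy integral formula on
   squares centred at z, averaged over the side length, bounds |F(z)| by the integral of |F| over a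
   square of side 2. Applied to F(w) = f(w) e^(|z|^2 - 2 conj(z) w) / c, for which
   |F(w)| = G(w) e^(|w - z|^2), and combined with G <= 1 + G^p (as p >= 1), this gives
   G(z) <= 20 e^2 / pi for every z. Hence for C = max 1 (20 e^2 / pi) the values G/C lie in [0,1],
   where (G/C)^q <= G^p because q >= p; so rho_q(f/(C c)) <= rho_p(f/c) <= 1, i.e.
   ||f||_q <= C ||f||_p. *)

lemma contour_integral_linepath_same_Im:
  assumes "a < b"
  shows "contour_integral (linepath (Complex a c) (Complex b c)) f =
           integral {a..b} (\<lambda>x. f (Complex x c))"
proof -
  define z z' where "z = Complex a c" and "z' = Complex b c"
  have "contour_integral (linepath z z') f =
         (z' - z) * integral {0..1} (\<lambda>x. f (linepath z z' x))"
    by (simp add: contour_integral_integral)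
  also have "z' - z = of_real (b - a)"
    by (simp add: z_def z'_def Complex_eq algebra_simps)
  also have "integral {0..1} (\<lambda>x. f (linepath z z' x)) =
             integral {0..(b - a) / (b - a)} (\<lambda>x. f (Complex (a + (b - a) * x) c))"
    using \<open>a < b\<close> by (simp add: linepath_def Complex_eq scaleR_conv_of_real algebra_simps z_def z'_def)
  also have "{0..(b - a) / (b - a)} = (\<lambda>x. x / (b - a)) ` {0..b - a}"
    using \<open>a < b\<close> by simp
  also have "integral \<dots> (\<lambda>x. f (Complex (a + (b - a) * x) c)) =
             integral {a-a..b-a} (\<lambda>x. f (Complex (x + a) c)) / of_real (b - a)"
    using \<open>a < b\<close> by (subst integral_stretch_real) (auto simp: scaleR_conv_of_real add_ac)
  also have "\<dots> = integral {a..b} (\<lambda>x. f (Complex x c)) / of_real (b - a)"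
    by (subst integral_shift_real_ivl) (rule refl)
  finally show ?thesis
    using \<open>a < b\<close> by (simp add: z_def z'_def)
qed

lemma norm_contour_integral_linepath_same_Im_le:
  assumes "a < b" and "continuous_on {a..b} (\<lambda>x. f (Complex x c))"
    and "k integrable_on {a..b}" and "\<And>x. x \<in> {a..b} \<Longrightarrow> norm (f (Complex x c)) \<le> k x"
  shows "norm (contour_integral (linepath (Complex a c) (Complex b c)) f) \<le> integral {a..b} k"
  unfolding contour_integral_linepath_same_Im[OF assms(1)]
  by (rule integral_norm_bound_integral) (use assms in \<open>auto intro: integrable_continuous_interval\<close>)

lemma norm_contour_integral_linepath_same_Re_le:
  assumes "a < b" and "continuous_on {a..b} (\<lambda>y. f (Complex c y))"
    and "k integrable_on {a..b}" and "\<And>y. y \<in> {a..b} \<Longrightarrow> norm (f (Complex c y)) \<le> k y"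
  shows "norm (contour_integral (linepath (Complex c a) (Complex c b)) f) \<le> integral {a..b} k"
proof -
  have "norm (contour_integral (linepath (Complex c a) (Complex c b)) f) =
        norm (integral {a..b} (\<lambda>y. f (Complex c y)))"
    using assms(1) by (subst contour_integral_linepath_same_Re[of _ c _ a b]) (auto simp: norm_mult)
  also have "\<dots> \<le> integral {a..b} k"
    by (rule integral_norm_bound_integral) (use assms in \<open>auto intro: integrable_continuous_interval\<close>)
  finally show ?thesis .
qed

lemma contour_integral_rectpath:
  assumes "continuous_on (path_image (rectpath a1 a3)) f"
  defines "a2 \<equiv> Complex (Re a3) (Im a1)" and "a4 \<equiv> Complex (Re a1) (Im a3)"
  shows "contour_integral (rectpath a1 a3) f =
           contour_integral (linepath a1 a2) f + contour_integral (linepath a2 a3) f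
         - contour_integral (linepath a4 a3) f - contour_integral (linepath a1 a4) f"
proof -
  have rp: "rectpath a1 a3 = linepath a1 a2 +++ linepath a2 a3 +++ linepath a3 a4 +++ linepath a4 a1"
    by (simp add: rectpath_def Let_def a2_def a4_def)
  have cont: "continuous_on (closed_segment a1 a2 \<union> closed_segment a2 a3 \<union>
                closed_segment a3 a4 \<union> closed_segment a4 a1) f"
    using assms(1) unfolding rp by (simp add: path_image_join Un_assoc)
  have seg: "f contour_integrable_on linepath a b"
    if "closed_segment a b \<subseteq> closed_segment a1 a2 \<union> closed_segment a2 a3 \<union>
          closed_segment a3 a4 \<union> closed_segment a4 a1" for a b
    using continuous_on_subset[OF cont that] contour_integrable_continuous_linepath by blast
  have "f contour_integrable_on linepath a1 a2" "f contour_integrable_on linepath a2 a3"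
    "f contour_integrable_on linepath a3 a4" "f contour_integrable_on linepath a4 a1"
    by (rule seg; blast)+
  moreover have "contour_integral (linepath a3 a4) f = - contour_integral (linepath a4 a3) f"
    "contour_integral (linepath a4 a1) f = - contour_integral (linepath a1 a4) f"
    by (metis contour_integral_reversepath reversepath_linepath valid_path_linepath)+
  ultimately show ?thesis
    unfolding rp by (simp add: contour_integrable_joinI)
qed

lemma integrable_cmod_Complex_lines:
  assumes "continuous_on UNIV F"
  shows "(\<lambda>x. cmod (F (Complex x y))) integrable_on {a..b}"
    and "(\<lambda>y. cmod (F (Complex x y))) integrable_on {a..b}"
  by (intro integrable_continuous_interval continuous_intros continuous_on_compose2[OF assms];
      auto simp: Complex_eq intro!: continuous_intros)+

lemma norm_contour_integral_Cauchy_kernel_le: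
  fixes F :: "complex \<Rightarrow> complex"
  assumes contF: "continuous_on UNIV F" and s: "s > 0"
  shows "\<bar>y - Im z\<bar> = s \<Longrightarrow>
      cmod (contour_integral (linepath (Complex (Re z - s) y) (Complex (Re z + s) y)) (\<lambda>w. F w / (w - z)))
      \<le> integral {Re z - s..Re z + s} (\<lambda>x. cmod (F (Complex x y))) / s"
    and "\<bar>x - Re z\<bar> = s \<Longrightarrow>
      cmod (contour_integral (linepath (Complex x (Im z - s)) (Complex x (Im z + s))) (\<lambda>w. F w / (w - z)))
      \<le> integral {Im z - s..Im z + s} (\<lambda>y. cmod (F (Complex x y))) / s"
proof -
  have kernel_le: "cmod (F w / (w - z)) \<le> cmod (F w) / s" if "s \<le> cmod (w - z)" for w
    unfolding norm_divide by (rule frac_le) (use that s in auto)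
  have cont: "continuous_on UNIV (\<lambda>t. F (f t) / (f t - z))" if "continuous_on UNIV f" "\<And>t. f t \<noteq> z" for f
    using that by (intro continuous_intros continuous_on_compose2[OF contF]) auto
  show "cmod (contour_integral (linepath (Complex (Re z - s) y) (Complex (Re z + s) y)) (\<lambda>w. F w / (w - z)))
      \<le> integral {Re z - s..Re z + s} (\<lambda>x. cmod (F (Complex x y))) / s" if y: "\<bar>y - Im z\<bar> = s"
  proof (rule norm_contour_integral_linepath_same_Im_le[where k = "\<lambda>x. cmod (F (Complex x y)) / s",
        simplified integral_divide])
    show "continuous_on {Re z - s..Re z + s} (\<lambda>x. F (Complex x y) / (Complex x y - z))"
      using y s by (intro continuous_on_subset[OF cont]) (auto simp: complex_eq_iff Complex_eq intro!: continuous_intros)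
    show "(\<lambda>x. cmod (F (Complex x y)) / s) integrable_on {Re z - s..Re z + s}"
      using integrable_cmod_Complex_lines(1)[OF contF] by (rule integrable_on_divide)
    show "cmod (F (Complex x y) / (Complex x y - z)) \<le> cmod (F (Complex x y)) / s" for x
      using abs_Im_le_cmod[of "Complex x y - z"] y by (intro kernel_le) simp
  qed (use s in simp)
  show "cmod (contour_integral (linepath (Complex x (Im z - s)) (Complex x (Im z + s))) (\<lambda>w. F w / (w - z)))
      \<le> integral {Im z - s..Im z + s} (\<lambda>y. cmod (F (Complex x y))) / s" if x: "\<bar>x - Re z\<bar> = s"
  proof (rule norm_contour_integral_linepath_same_Re_le[where k = "\<lambda>y. cmod (F (Complex x y)) / s",
        simplified integral_divide])
    show "continuous_on {Im z - s..Im z + s} (\<lambda>y. F (Complex x y) / (Complex x y - z))"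
      using x s by (intro continuous_on_subset[OF cont]) (auto simp: complex_eq_iff Complex_eq intro!: continuous_intros)
    show "(\<lambda>y. cmod (F (Complex x y)) / s) integrable_on {Im z - s..Im z + s}"
      using integrable_cmod_Complex_lines(2)[OF contF] by (rule integrable_on_divide)
    show "cmod (F (Complex x y) / (Complex x y - z)) \<le> cmod (F (Complex x y)) / s" for y
      using abs_Re_le_cmod[of "Complex x y - z"] x by (intro kernel_le) simp
  qed (use s in simp)
qed

lemma cauchy_square_estimate:
  fixes F :: "complex \<Rightarrow> complex"
  assumes hol: "F holomorphic_on UNIV" and s: "s > 0"
  shows "2 * pi * cmod (F z) \<le>
    (integral {Re z - s..Re z + s} (\<lambda>x. cmod (F (Complex x (Im z - s))))
   + integral {Re z - s..Re z + s} (\<lambda>x. cmod (F (Complex x (Im z + s))))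
   + integral {Im z - s..Im z + s} (\<lambda>y. cmod (F (Complex (Re z - s) y)))
   + integral {Im z - s..Im z + s} (\<lambda>y. cmod (F (Complex (Re z + s) y)))) / s"
proof -
  define a1 a3 where "a1 = Complex (Re z - s) (Im z - s)" and "a3 = Complex (Re z + s) (Im z + s)"
  define g where "g w = F w / (w - z)" for w
  have contF: "continuous_on UNIV F"
    using hol holomorphic_on_imp_continuous_on by blast
  have contg: "continuous_on A g" if "z \<notin> A" for A
    unfolding g_def using that by (intro continuous_intros continuous_on_subset[OF contF]) auto
  have zbox: "z \<in> box a1 a3"
    using s by (auto simp: in_box_complex_iff a1_def a3_def)
  then have znot: "z \<notin> path_image (rectpath a1 a3)"
    using s by (simp add: path_image_rectpath_cbox_minus_box a1_def a3_def)
  have "(g has_contour_integral (2 * pi * \<i> * winding_number (rectpath a1 a3) z * F z)) (rectpath a1 a3)"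
    unfolding g_def by (rule Cauchy_integral_formula_convex_simple[where S=UNIV]) (use hol znot in auto)
  then have "contour_integral (rectpath a1 a3) g = 2 * pi * \<i> * F z"
    using winding_number_rectpath[OF zbox] contour_integral_unique by force
  then have "2 * pi * cmod (F z) = cmod (contour_integral (rectpath a1 a3) g)"
    by (simp add: norm_mult)
  also have "\<dots> \<le> cmod (contour_integral (linepath a1 (Complex (Re z + s) (Im z - s))) g)
      + cmod (contour_integral (linepath (Complex (Re z + s) (Im z - s)) a3) g)
      + cmod (contour_integral (linepath (Complex (Re z - s) (Im z + s)) a3) g)
      + cmod (contour_integral (linepath a1 (Complex (Re z - s) (Im z + s))) g)"
    using contour_integral_rectpath[OF contg[OF znot]]
    by (simp add: a1_def a3_def) (smt (verit) norm_triangle_ineq norm_triangle_ineq4)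
  also have "\<dots> \<le> integral {Re z - s..Re z + s} (\<lambda>x. cmod (F (Complex x (Im z - s)))) / s
      + integral {Im z - s..Im z + s} (\<lambda>y. cmod (F (Complex (Re z + s) y))) / s
      + integral {Re z - s..Re z + s} (\<lambda>x. cmod (F (Complex x (Im z + s)))) / s
      + integral {Im z - s..Im z + s} (\<lambda>y. cmod (F (Complex (Re z - s) y))) / s"
    unfolding a1_def a3_def g_def using s
    by (intro add_mono norm_contour_integral_Cauchy_kernel_le[OF contF]) auto
  finally show ?thesis
    by (simp add: add_divide_distrib add_ac)
qed

lemma measurable_Complex [measurable]:
  assumes [measurable]: "f \<in> borel_measurable M" "g \<in> borel_measurable M"
  shows "(\<lambda>x. Complex (f x) (g x)) \<in> borel_measurable M"
proof -
  have "(\<lambda>x. Complex (f x) (g x)) = (\<lambda>x. of_real (f x) + \<i> * of_real (g x))"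
    by (simp add: Complex_eq)
  also have "\<dots> \<in> borel_measurable M" by measurable
  finally show ?thesis .
qed

lemma borel_measurable_Complex_pair [measurable]:
  "(\<lambda>p :: real \<times> real. Complex (fst p) (snd p)) \<in> borel_measurable borel"
  by (intro borel_measurable_continuous_onI) (simp add: Complex_eq continuous_intros)

lemma distr_lborel_Complex:
  "distr (lborel :: (real \<times> real) measure) borel (\<lambda>p. Complex (fst p) (snd p)) = lborel"
proof (rule lborel_eqI[symmetric])
  fix l u :: complex assume le: "\<And>b. b \<in> Basis \<Longrightarrow> l \<bullet> b \<le> u \<bullet> b"
  then have "Re l \<le> Re u" "Im l \<le> Im u"
    using le[of 1] le[of \<i>] by (auto simp: Basis_complex_def inner_complex_def)
  have "(\<lambda>p. Complex (fst p) (snd p)) -` box l u = box (Re l, Im l) (Re u, Im u)"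
    by (auto simp: box_def Basis_complex_def Basis_prod_def inner_prod_def)
  then have "emeasure (distr lborel borel (\<lambda>p. Complex (fst p) (snd p))) (box l u) =
      emeasure lborel (box (Re l, Im l) (Re u, Im u))"
    by (subst emeasure_distr) auto
  also have "\<dots> = ennreal ((Re u - Re l) * (Im u - Im l))"
    using \<open>Re l \<le> Re u\<close> \<open>Im l \<le> Im u\<close>
    by (subst emeasure_lborel_box) (auto simp: Basis_prod_def inner_prod_def)
  finally show "emeasure (distr lborel borel (\<lambda>p. Complex (fst p) (snd p))) (box l u) =
      (\<Prod>b\<in>Basis. (u - l) \<bullet> b)"
    by (simp add: Basis_complex_def)
qed simp

lemma nn_integral_lborel_complex:
  fixes f :: "complex \<Rightarrow> ennreal"
  assumes [measurable]: "f \<in> borel_measurable borel"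
  shows "(\<integral>\<^sup>+z. f z \<partial>lborel) = (\<integral>\<^sup>+y. (\<integral>\<^sup>+x. f (Complex x y) \<partial>lborel) \<partial>lborel)"
    and "(\<integral>\<^sup>+z. f z \<partial>lborel) = (\<integral>\<^sup>+x. (\<integral>\<^sup>+y. f (Complex x y) \<partial>lborel) \<partial>lborel)"
proof -
  have pair: "(\<integral>\<^sup>+z. f z \<partial>lborel) = (\<integral>\<^sup>+p. f (Complex (fst p) (snd p)) \<partial>(lborel \<Otimes>\<^sub>M lborel))"
    by (subst distr_lborel_Complex[symmetric], subst nn_integral_distr) (auto simp: lborel_prod)
  have [measurable]: "(\<lambda>p. f (Complex (fst p) (snd p))) \<in> borel_measurable (lborel \<Otimes>\<^sub>M lborel)"
    unfolding lborel_prod measurable_lborel2 by measurable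
  show "(\<integral>\<^sup>+z. f z \<partial>lborel) = (\<integral>\<^sup>+y. (\<integral>\<^sup>+x. f (Complex x y) \<partial>lborel) \<partial>lborel)"
    unfolding pair using lborel_pair.nn_integral_snd[of "\<lambda>p. f (Complex (fst p) (snd p))"] by simp
  show "(\<integral>\<^sup>+z. f z \<partial>lborel) = (\<integral>\<^sup>+x. (\<integral>\<^sup>+y. f (Complex x y) \<partial>lborel) \<partial>lborel)"
    unfolding pair using lborel.nn_integral_fst[of "\<lambda>p. f (Complex (fst p) (snd p))"] by simp
qed

lemma nn_integral_cbox_complex:
  fixes f :: "complex \<Rightarrow> ennreal"
  assumes [measurable]: "f \<in> borel_measurable borel"
  shows "(\<integral>\<^sup>+w. f w * indicator (cbox a b) w \<partial>lborel) =
      (\<integral>\<^sup>+y. (\<integral>\<^sup>+x. f (Complex x y) * indicator {Re a..Re b} x \<partial>lborel) * indicator {Im a..Im b} y \<partial>lborel)"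
    and "(\<integral>\<^sup>+w. f w * indicator (cbox a b) w \<partial>lborel) =
      (\<integral>\<^sup>+x. (\<integral>\<^sup>+y. f (Complex x y) * indicator {Im a..Im b} y \<partial>lborel) * indicator {Re a..Re b} x \<partial>lborel)"
proof -
  have ind: "indicator (cbox a b) (Complex x y) =
      (indicator {Re a..Re b} x * indicator {Im a..Im b} y :: ennreal)" for x y
    by (auto simp: indicator_def in_cbox_complex_iff)
  have [measurable]: "(\<lambda>w. f w * indicator (cbox a b) w) \<in> borel_measurable borel"
    by measurable
  show "(\<integral>\<^sup>+w. f w * indicator (cbox a b) w \<partial>lborel) =
      (\<integral>\<^sup>+y. (\<integral>\<^sup>+x. f (Complex x y) * indicator {Re a..Re b} x \<partial>lborel) * indicator {Im a..Im b} y \<partial>lborel)"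
    unfolding nn_integral_lborel_complex(1)[of "\<lambda>w. f w * indicator (cbox a b) w", simplified]
    by (simp only: ind mult.assoc[symmetric]) (auto intro!: nn_integral_cong nn_integral_multc)
  show "(\<integral>\<^sup>+w. f w * indicator (cbox a b) w \<partial>lborel) =
      (\<integral>\<^sup>+x. (\<integral>\<^sup>+y. f (Complex x y) * indicator {Im a..Im b} y \<partial>lborel) * indicator {Re a..Re b} x \<partial>lborel)"
    unfolding nn_integral_lborel_complex(2)[of "\<lambda>w. f w * indicator (cbox a b) w", simplified]
    by (simp only: ind mult.assoc[symmetric] mult.commute[of "indicator {Re a..Re b} x" for x])
      (auto intro!: nn_integral_cong nn_integral_multc)
qed

lemma nn_integral_symmetric_shifts_le:
  fixes N :: "real \<Rightarrow> ennreal"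
  assumes [measurable]: "N \<in> borel_measurable borel"
  shows "(\<integral>\<^sup>+s. (N (t - s) + N (t + s)) * indicator {1/2..1} s \<partial>lborel) \<le>
         (\<integral>\<^sup>+u. N u * indicator {t - 1..t + 1} u \<partial>lborel)"
proof -
  have affine: "(\<integral>\<^sup>+s. N (t + c * s) * indicator {1/2..1} s \<partial>lborel) =
      (\<integral>\<^sup>+u. N u * indicator (if c = 1 then {t + 1/2..t + 1} else {t - 1..t - 1/2}) u \<partial>lborel)"
    if "c = 1 \<or> c = -1" for c :: real
    using that by (subst nn_integral_real_affine[where c = c and t = t])
      (auto intro!: nn_integral_cong simp: indicator_def)
  have "(\<integral>\<^sup>+s. (N (t - s) + N (t + s)) * indicator {1/2..1} s \<partial>lborel) =
      (\<integral>\<^sup>+u. N u * indicator {t - 1..t - 1/2} u \<partial>lborel) + (\<integral>\<^sup>+u. N u * indicator {t + 1/2..t + 1} u \<partial>lborel)"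
    using affine[of "-1"] affine[of 1] by (simp add: distrib_right nn_integral_add)
  also have "\<dots> = (\<integral>\<^sup>+u. N u * (indicator {t - 1..t - 1/2} u + indicator {t + 1/2..t + 1} u) \<partial>lborel)"
    by (simp add: distrib_left nn_integral_add)
  also have "\<dots> \<le> (\<integral>\<^sup>+u. N u * indicator {t - 1..t + 1} u \<partial>lborel)"
    by (intro nn_integral_mono mult_left_mono) (auto simp: indicator_def)
  finally show ?thesis .
qed

lemma norm_le_line_integrals:
  fixes F :: "complex \<Rightarrow> complex"
  assumes hol: "F holomorphic_on UNIV" and s: "s \<in> {1/2..1}"
  shows "pi * cmod (F z) \<le>
      integral {Re z - 1..Re z + 1} (\<lambda>x. cmod (F (Complex x (Im z - s))))
    + integral {Re z - 1..Re z + 1} (\<lambda>x. cmod (F (Complex x (Im z + s))))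
    + integral {Im z - 1..Im z + 1} (\<lambda>y. cmod (F (Complex (Re z - s) y)))
    + integral {Im z - 1..Im z + 1} (\<lambda>y. cmod (F (Complex (Re z + s) y)))"
proof -
  have contF: "continuous_on UNIV F"
    using hol holomorphic_on_imp_continuous_on by blast
  note horizontal = integrable_cmod_Complex_lines(1)[OF contF]
    and vertical = integrable_cmod_Complex_lines(2)[OF contF]
  define I where "I = integral {Re z - s..Re z + s} (\<lambda>x. cmod (F (Complex x (Im z - s))))
   + integral {Re z - s..Re z + s} (\<lambda>x. cmod (F (Complex x (Im z + s))))
   + integral {Im z - s..Im z + s} (\<lambda>y. cmod (F (Complex (Re z - s) y)))
   + integral {Im z - s..Im z + s} (\<lambda>y. cmod (F (Complex (Re z + s) y)))"
  have "I \<ge> 0"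
    unfolding I_def by (intro add_nonneg_nonneg integral_nonneg horizontal vertical) auto
  then have "I * 1 \<le> I * (2 * s)"
    using s by (intro mult_left_mono) auto
  then have "I / s \<le> 2 * I"
    using s by (simp add: divide_le_eq mult_ac)
  moreover have "2 * pi * cmod (F z) \<le> I / s"
    unfolding I_def using cauchy_square_estimate[OF hol] s by simp
  moreover have "I \<le> integral {Re z - 1..Re z + 1} (\<lambda>x. cmod (F (Complex x (Im z - s))))
    + integral {Re z - 1..Re z + 1} (\<lambda>x. cmod (F (Complex x (Im z + s))))
    + integral {Im z - 1..Im z + 1} (\<lambda>y. cmod (F (Complex (Re z - s) y)))
    + integral {Im z - 1..Im z + 1} (\<lambda>y. cmod (F (Complex (Re z + s) y)))"
    unfolding I_def using s
    by (intro add_mono integral_subset_le horizontal vertical) auto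
  ultimately show ?thesis
    by linarith
qed

lemma norm_le_square_nn_integral:
  fixes F :: "complex \<Rightarrow> complex"
  assumes hol: "F holomorphic_on UNIV"
  shows "ennreal (pi * cmod (F z)) \<le>
    4 * (\<integral>\<^sup>+w. ennreal (cmod (F w)) * indicator (cbox (z - Complex 1 1) (z + Complex 1 1)) w \<partial>lborel)"
proof -
  define x0 y0 where "x0 = Re z" and "y0 = Im z"
  define S where "S = (\<integral>\<^sup>+w. ennreal (cmod (F w)) * indicator (cbox (z - Complex 1 1) (z + Complex 1 1)) w \<partial>lborel)"
  define H where "H y = (\<integral>\<^sup>+x. ennreal (cmod (F (Complex x y))) * indicator {x0 - 1..x0 + 1} x \<partial>lborel)" for y
  define V where "V x = (\<integral>\<^sup>+y. ennreal (cmod (F (Complex x y))) * indicator {y0 - 1..y0 + 1} y \<partial>lborel)" for x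
  have contF: "continuous_on UNIV F"
    using hol holomorphic_on_imp_continuous_on by blast
  then have [measurable]: "F \<in> borel_measurable borel"
    by (rule borel_measurable_continuous_onI)
  have [measurable]: "H \<in> borel_measurable borel" "V \<in> borel_measurable borel"
    unfolding H_def V_def by measurable
  note horizontal = integrable_cmod_Complex_lines(1)[OF contF]
    and vertical = integrable_cmod_Complex_lines(2)[OF contF]
  have H: "H y = ennreal (integral {x0 - 1..x0 + 1} (\<lambda>x. cmod (F (Complex x y))))" for y
    unfolding H_def by (intro nn_integral_has_integral_lebesgue' integrable_integral horizontal) auto
  have V: "V x = ennreal (integral {y0 - 1..y0 + 1} (\<lambda>y. cmod (F (Complex x y))))" for x
    unfolding V_def by (intro nn_integral_has_integral_lebesgue' integrable_integral vertical) auto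
  have S_H: "S = (\<integral>\<^sup>+y. H y * indicator {y0 - 1..y0 + 1} y \<partial>lborel)"
    unfolding S_def H_def using nn_integral_cbox_complex(1)[of "\<lambda>w. ennreal (cmod (F w))"]
    by (simp add: x0_def y0_def)
  have S_V: "S = (\<integral>\<^sup>+x. V x * indicator {x0 - 1..x0 + 1} x \<partial>lborel)"
    unfolding S_def V_def using nn_integral_cbox_complex(2)[of "\<lambda>w. ennreal (cmod (F w))"]
    by (simp add: x0_def y0_def)
  (* Averaging over s in [1/2, 1] the bound by the four lines at distance s from z: each pair of
     opposite lines covers each point of the square at most once. *)
  have "ennreal (pi * cmod (F z) / 2) = (\<integral>\<^sup>+s. ennreal (pi * cmod (F z)) * indicator {1/2..1::real} s \<partial>lborel)"
    by (simp add: nn_integral_cmult_indicator)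
      (metis divide_ennreal_def ennreal_divide_numeral mult_nonneg_nonneg pi_ge_zero norm_ge_zero)
  also have "\<dots> \<le> (\<integral>\<^sup>+s. ((H (y0 - s) + H (y0 + s)) + (V (x0 - s) + V (x0 + s))) * indicator {1/2..1} s \<partial>lborel)"
  proof (rule nn_integral_mono)
    fix s
    have "ennreal (pi * cmod (F z)) \<le> (H (y0 - s) + H (y0 + s)) + (V (x0 - s) + V (x0 + s))"
      if "s \<in> {1/2..1}"
    proof -
      have "ennreal (pi * cmod (F z)) \<le> ennreal
         (integral {x0 - 1..x0 + 1} (\<lambda>x. cmod (F (Complex x (y0 - s))))
        + integral {x0 - 1..x0 + 1} (\<lambda>x. cmod (F (Complex x (y0 + s))))
        + (integral {y0 - 1..y0 + 1} (\<lambda>y. cmod (F (Complex (x0 - s) y)))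
        + integral {y0 - 1..y0 + 1} (\<lambda>y. cmod (F (Complex (x0 + s) y)))))"
        using norm_le_line_integrals[OF hol that, of z] by (intro ennreal_leI) (simp add: x0_def y0_def)
      then show ?thesis
        by (simp add: H V integral_nonneg horizontal vertical)
    qed
    then show "ennreal (pi * cmod (F z)) * indicator {1/2..1} s \<le>
        ((H (y0 - s) + H (y0 + s)) + (V (x0 - s) + V (x0 + s))) * indicator {1/2..1} s"
      by (cases "s \<in> {1/2..1}") auto
  qed
  also have "\<dots> = (\<integral>\<^sup>+s. (H (y0 - s) + H (y0 + s)) * indicator {1/2..1} s \<partial>lborel)
      + (\<integral>\<^sup>+s. (V (x0 - s) + V (x0 + s)) * indicator {1/2..1} s \<partial>lborel)"
    by (simp add: distrib_right nn_integral_add)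
  also have "\<dots> \<le> S + S"
    using nn_integral_symmetric_shifts_le[of H y0] nn_integral_symmetric_shifts_le[of V x0]
    by (simp add: S_H[symmetric] S_V[symmetric] add_mono)
  finally have "ennreal (pi * cmod (F z) / 2) \<le> S + S" .
  then have "2 * ennreal (pi * cmod (F z) / 2) \<le> 4 * S"
    using mult_left_mono[of _ "S + S" 2] by (simp add: mult_2[symmetric] mult.assoc)
  then show ?thesis
    by (simp add: S_def numeral_mult_ennreal)
qed

lemma le_one_plus_powr:
  fixes x q :: real
  assumes "0 \<le> x" "1 \<le> q"
  shows "x \<le> 1 + x powr q"
proof (cases "x \<le> 1")
  case True
  then show ?thesis
    using powr_ge_zero[of x q] by linarith
next
  case False
  then have "x powr 1 \<le> x powr q"
    using assms by (intro powr_mono) auto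
  then show ?thesis
    using False by simp
qed

lemma cmod_diff_power2:
  fixes w z :: complex
  shows "(cmod (w - z))\<^sup>2 = (cmod w)\<^sup>2 - 2 * Re (cnj z * w) + (cmod z)\<^sup>2"
  unfolding cmod_power2 by (simp add: power2_eq_square algebra_simps)

lemma cmod_diff_power2_le_2:
  assumes "w \<in> cbox (z - Complex 1 1) (z + Complex 1 1)"
  shows "(cmod (w - z))\<^sup>2 \<le> 2"
proof -
  have "\<bar>Re (w - z)\<bar> \<le> 1" "\<bar>Im (w - z)\<bar> \<le> 1"
    using assms by (auto simp: in_cbox_complex_iff)
  then have "(Re (w - z))\<^sup>2 \<le> 1" "(Im (w - z))\<^sup>2 \<le> 1"
    by (simp_all only: abs_square_le_1)
  then show ?thesis
    by (simp add: cmod_power2)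
qed

lemma fock_weighted_norm_le_of_modular_le_one:
  fixes h :: "complex \<Rightarrow> complex" and p :: "complex \<Rightarrow> real"
  assumes hol: "h holomorphic_on UNIV" and p1: "\<And>z. 1 \<le> p z"
    and [measurable]: "p \<in> borel_measurable borel"
    and modular: "fock_modular p h \<le> 1"
  shows "cmod (h z) * exp (- (cmod z)\<^sup>2) \<le> 20 * exp 2 / pi"
proof -
  define F where "F w = h w * exp (complex_of_real ((cmod z)\<^sup>2) - 2 * cnj z * w)" for w
  define G where "G w = cmod (h w) * exp (- (cmod w)\<^sup>2)" for w
  define Q where "Q = cbox (z - Complex 1 1) (z + Complex 1 1)"
  have G_nonneg: "0 \<le> G w" for w
    by (simp add: G_def)
  have norm_F: "cmod (F w) = G w * exp ((cmod (w - z))\<^sup>2)" for w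
    by (simp add: F_def G_def norm_mult cmod_diff_power2 mult.assoc exp_add[symmetric])
  have F_on_Q: "cmod (F w) \<le> exp 2 * (1 + G w powr p w)" if "w \<in> Q" for w
    using that cmod_diff_power2_le_2[of w z] le_one_plus_powr[OF G_nonneg p1] G_nonneg
    by (simp add: Q_def norm_F mult.commute[of "exp 2"] mult_mono)
  have G_powr: "G w powr p w = cmod (h w) powr p w * exp (- p w * (cmod w)\<^sup>2)" for w
    by (simp add: G_def powr_mult exp_powr_real mult_ac)
  have [measurable]: "h \<in> borel_measurable borel" "Q \<in> sets borel"
    using hol by (auto simp: Q_def intro: borel_measurable_continuous_onI holomorphic_on_imp_continuous_on)
  have "F holomorphic_on UNIV"
    unfolding F_def by (intro holomorphic_intros hol)
  from norm_le_square_nn_integral[OF this, of z]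
  have "ennreal (pi * G z) \<le> 4 * (\<integral>\<^sup>+w. ennreal (cmod (F w)) * indicator Q w \<partial>lborel)"
    unfolding Q_def norm_F[of z] by simp
  also have "\<dots> \<le> 4 * (\<integral>\<^sup>+w. ennreal (exp 2) * (indicator Q w + ennreal (G w powr p w)) \<partial>lborel)"
  proof (intro mult_left_mono nn_integral_mono)
    fix w
    have "ennreal (cmod (F w)) \<le> ennreal (exp 2 * (1 + G w powr p w))" if "w \<in> Q"
      using F_on_Q[OF that] by (rule ennreal_leI)
    also have "\<dots> = ennreal (exp 2) * (1 + ennreal (G w powr p w))"
      by (simp add: ennreal_mult ennreal_plus)
    finally show "ennreal (cmod (F w)) * indicator Q w \<le>
        ennreal (exp 2) * (indicator Q w + ennreal (G w powr p w))"
      by (cases "w \<in> Q") auto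
  qed auto
  also have "\<dots> = 4 * ennreal (exp 2) * (emeasure lborel Q + fock_modular p h)"
    by (subst nn_integral_cmult) (auto simp: nn_integral_add fock_modular_def G_powr mult.assoc)
  also have "\<dots> \<le> 4 * ennreal (exp 2) * (4 + 1)"
    using modular by (intro mult_left_mono add_mono)
      (auto simp: Q_def emeasure_lborel_cbox_eq Basis_complex_def)
  also have "\<dots> = ennreal (20 * exp 2)"
    by (simp add: ennreal_mult mult.commute mult.left_commute)
  finally have "pi * G z \<le> 20 * exp 2"
    by (subst (asm) ennreal_le_iff) auto
  then show ?thesis
    by (simp add: G_def field_simps)
qed

lemma fock_modular_divide_le_of_le_exponent:
  fixes h :: "complex \<Rightarrow> complex" and p q :: "complex \<Rightarrow> real"
  assumes hol: "h holomorphic_on UNIV" and p1: "\<And>z. 1 \<le> p z" and pq: "\<And>z. p z \<le> q z"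
    and [measurable]: "p \<in> borel_measurable borel" and modular: "fock_modular p h \<le> 1"
    and C: "1 \<le> C" "20 * exp 2 / pi \<le> C"
  shows "fock_modular q (\<lambda>z. h z / of_real C) \<le> fock_modular p h"
  unfolding fock_modular_def
proof (intro nn_integral_mono ennreal_leI)
  fix z
  define a where "a = cmod (h z) * exp (- (cmod z)\<^sup>2)"
  have weighted: "u powr r * exp (- r * (cmod z)\<^sup>2) = (u * exp (- (cmod z)\<^sup>2)) powr r" for u r :: real
    by (simp add: powr_mult exp_powr_real mult_ac)
  have "0 \<le> a" "a \<le> C"
    using fock_weighted_norm_le_of_modular_le_one[OF hol p1 _ modular, of z] C by (auto simp: a_def)
  have "cmod (h z / of_real C) powr q z * exp (- q z * (cmod z)\<^sup>2) = (a / C) powr q z"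
    unfolding weighted a_def using C by (simp add: norm_divide)
  also have "\<dots> \<le> (a / C) powr p z"
    using \<open>0 \<le> a\<close> \<open>a \<le> C\<close> C p1[of z] pq[of z] by (intro powr_mono') auto
  also have "\<dots> \<le> a powr p z"
    using \<open>0 \<le> a\<close> C p1[of z] mult_left_mono[of 1 C a] by (intro powr_mono2) (auto simp: divide_le_eq)
  also have "\<dots> = cmod (h z) powr p z * exp (- p z * (cmod z)\<^sup>2)"
    unfolding weighted a_def ..
  finally show "cmod (h z / of_real C) powr q z * exp (- q z * (cmod z)\<^sup>2)
      \<le> cmod (h z) powr p z * exp (- p z * (cmod z)\<^sup>2)" .
qed

lemma fock_modular_scale_le:
  fixes g :: "complex \<Rightarrow> complex" and p :: "complex \<Rightarrow> real"
  assumes p1: "\<And>z. 1 \<le> p z" and [measurable]: "p \<in> borel_measurable borel" "g \<in> borel_measurable borel"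
    and t: "0 \<le> t" "t \<le> 1"
  shows "fock_modular p (\<lambda>z. of_real t * g z) \<le> ennreal t * fock_modular p g"
  unfolding fock_modular_def
proof (subst nn_integral_cmult[symmetric], measurable, intro nn_integral_mono)
  fix z
  have "t powr p z \<le> t"
    using powr_mono'[of 1 "p z" t] p1[of z] t by auto
  then have "(t * cmod (g z)) powr p z \<le> t * cmod (g z) powr p z"
    using t by (simp add: powr_mult mult_right_mono)
  then show "ennreal (cmod (of_real t * g z) powr p z * exp (- p z * (cmod z)\<^sup>2))
      \<le> ennreal t * ennreal (cmod (g z) powr p z * exp (- p z * (cmod z)\<^sup>2))"
    using t by (simp add: norm_mult ennreal_mult'[symmetric] mult.assoc mult_right_mono)
qed

lemma Lp_var_imp_modular_le_one:
  fixes f :: "complex \<Rightarrow> complex" and p :: "complex \<Rightarrow> real"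
  assumes f: "f \<in> Lp_var p" and p1: "\<And>z. 1 \<le> p z" and [measurable]: "p \<in> borel_measurable borel"
  shows "\<exists>c>0. fock_modular p (\<lambda>z. f z / of_real c) \<le> 1"
proof -
  obtain c where c: "c > 0" and finite: "fock_modular p (\<lambda>z. of_real c * f z) < \<infinity>"
    using f by (auto simp: Lp_var_def)
  have [measurable]: "f \<in> borel_measurable borel"
    using f by (simp add: Lp_var_def)
  obtain K where K: "fock_modular p (\<lambda>z. of_real c * f z) = ennreal K" "0 \<le> K"
    using finite by (cases "fock_modular p (\<lambda>z. of_real c * f z)" rule: ennreal_cases) auto
  define t where "t = 1 / (K + 1)"
  have t: "0 < t" "t \<le> 1" "t * K \<le> 1"
    using K by (auto simp: t_def field_simps)
  have "fock_modular p (\<lambda>z. f z / of_real (1 / (c * t))) = fock_modular p (\<lambda>z. of_real t * (of_real c * f z))"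
    using c t by (simp add: field_simps)
  also have "\<dots> \<le> ennreal t * ennreal K"
    using fock_modular_scale_le[where p = p and g = "\<lambda>z. of_real c * f z" and t = t, OF p1] t K by simp
  also have "\<dots> \<le> 1"
    using t K by (simp add: ennreal_mult[symmetric])
  finally show ?thesis
    using c t by (intro exI[of _ "1 / (c * t)"]) auto
qed

lemma Lp_var_of_modular_le_one:
  assumes "f \<in> borel_measurable lborel" "0 < c" "fock_modular p (\<lambda>z. f z / of_real c) \<le> 1"
  shows "f \<in> Lp_var p"
proof -
  have "fock_modular p (\<lambda>z. of_real (1 / c) * f z) < \<infinity>"
    using assms by (simp add: divide_inverse mult.commute order_le_less_trans)
  then show ?thesis
    using assms unfolding Lp_var_def by (auto intro!: exI[of _ "1 / c"])
qed

lemma Lp_var_norm_le_mult: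
  assumes "0 < C" and ex: "\<exists>c>0. fock_modular p (\<lambda>z. f z / of_real c) \<le> 1"
    and transfer: "\<And>c. 0 < c \<Longrightarrow> fock_modular p (\<lambda>z. f z / of_real c) \<le> 1 \<Longrightarrow>
        fock_modular q (\<lambda>z. f z / of_real (C * c)) \<le> 1"
  shows "Lp_var_norm q f \<le> C * Lp_var_norm p f"
proof -
  have "Lp_var_norm q f / C \<le> c" if "0 < c" "fock_modular p (\<lambda>z. f z / of_real c) \<le> 1" for c
  proof -
    have "Lp_var_norm q f \<le> C * c"
      unfolding Lp_var_norm_def using transfer[OF that] \<open>0 < C\<close> \<open>0 < c\<close>
      by (intro cInf_lower) (auto simp: bdd_below_def intro!: exI[of _ 0])
    then show ?thesis
      using \<open>0 < C\<close> by (simp add: divide_le_eq mult.commute)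
  qed
  then have "Lp_var_norm q f / C \<le> Lp_var_norm p f"
    unfolding Lp_var_norm_def using ex by (intro cInf_greatest) auto
  then show ?thesis
    using \<open>0 < C\<close> by (simp add: divide_le_eq mult.commute)
qed

lemma fock_modular_le_one_of_le_exponent:
  fixes f :: "complex \<Rightarrow> complex" and p q :: "complex \<Rightarrow> real"
  assumes "f holomorphic_on UNIV" and "\<And>z. 1 \<le> p z" and "\<And>z. p z \<le> q z"
    and "p \<in> borel_measurable borel" and "0 < c" and "fock_modular p (\<lambda>z. f z / of_real c) \<le> 1"
  shows "fock_modular q (\<lambda>z. f z / of_real (max 1 (20 * exp 2 / pi) * c)) \<le> 1"
proof -
  have "(\<lambda>z. f z / of_real c) holomorphic_on UNIV"
    using assms(1) by (intro holomorphic_intros) auto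
  from fock_modular_divide_le_of_le_exponent[OF this assms(2-4,6), of "max 1 (20 * exp 2 / pi)"]
  show ?thesis
    using assms(6) by (simp add: divide_divide_eq_left mult.commute)
qed

theorem mainTheorem6:
  fixes p q :: "complex \<Rightarrow> real"
  assumes "var_exponent_bdd p" and "var_exponent_bdd q"
    and "\<And>z. p z \<le> q z"
  shows "Fock_var p \<subseteq> Fock_var q \<and>
    (\<exists>M>0. \<forall>f\<in>Fock_var p. Lp_var_norm q f \<le> M * Lp_var_norm p f)"
proof -
  have p1: "\<And>z. 1 \<le> p z" and pmeas: "p \<in> borel_measurable borel"
    using assms(1) by (auto simp: var_exponent_bdd_def var_exponent_def)
  define C where "C = max 1 (20 * exp 2 / pi)"
  have "0 < C"
    by (simp add: C_def)
  have transfer: "fock_modular q (\<lambda>z. f z / of_real (C * c)) \<le> 1"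
    if "f \<in> Fock_var p" "0 < c" "fock_modular p (\<lambda>z. f z / of_real c) \<le> 1" for f c
    using that fock_modular_le_one_of_le_exponent[OF _ p1 assms(3) pmeas] by (auto simp: C_def Fock_var_def)
  have ex: "\<exists>c>0. fock_modular p (\<lambda>z. f z / of_real c) \<le> 1" if "f \<in> Fock_var p" for f
    using that Lp_var_imp_modular_le_one[OF _ p1 pmeas] by (auto simp: Fock_var_def)
  have "f \<in> Fock_var q" if f: "f \<in> Fock_var p" for f
  proof -
    obtain c where "0 < c" "fock_modular p (\<lambda>z. f z / of_real c) \<le> 1"
      using ex[OF f] by blast
    with f \<open>0 < C\<close> have "f \<in> Lp_var q"
      by (intro Lp_var_of_modular_le_one[of _ "C * c"] transfer) (auto simp: Fock_var_def Lp_var_def)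
    with f show ?thesis
      by (simp add: Fock_var_def)
  qed
  moreover have "Lp_var_norm q f \<le> C * Lp_var_norm p f" if "f \<in> Fock_var p" for f
    using that ex transfer \<open>0 < C\<close> by (intro Lp_var_norm_le_mult) auto
  ultimately show ?thesis
    using \<open>0 < C\<close> by blast
qed

end
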